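(* Fix $q\in[0,1)$. There is a constant $C>0$ depending only on $q$ such that the following holds. Let $N\in\mathbb N$, $k\in\llbracket0,N\rrbracket$, $a\in\mathbb N$, $b\in\mathbb R$, $t\ge0$, and let $X$ be an integer sufficiently large depending on $N,k,a,b$. Let $u$ be a random bijection of $\llbracket -X,X\rrbracket$ that is the identity on $\llbracket -X,-X+k-1\rrbracket$ and whose restriction to $\llbracket -X+k,X\rrbracket$ has law $\mathcal M_{-X+k,X}$; let $\ddot\zeta_0$ have the law of the $s\to\infty$ limit of the multi-species dynamics on the sites $\llbracket -X,k\rrbracket$ started from $u$ (values at sites $\llbracket k+1,X\rrbracket$ unchanged); and let $(\ddot\zeta_t)_{t\ge0}$ be the multi-species ASEP on $\llbracket -X,X\rrbracket$ started from $\ddot\zeta_0$. Write $\ddot\zeta^i_t(x)=\mathbb 1[\ddot\zeta_t(x)\le i]$. Let $\ddot{\mathcal E}$ be the event that $h\{\ddot\zeta^{-X+k-1}_t\}(N-k+a)=N-k+a$ and $h\{\ddot\zeta^{-1+k-N}_t\}(N-k+a)<N-k-a$. Then $\mathbb P[\ddot{\mathcal E}]\le Cq^{a/2}$.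
   Context: $\llbracket x,y\rrbracket$ is the set of integers in $[x,y]$. For integers $m\le n$, $\mathcal M_{m,n}$ is the Mallows measure on bijections $w$ of $\llbracket m,n\rrbracket$: $\mathcal M_{m,n}(w)\propto q^{\#\{m\le i<j\le n:\,w(i)<w(j)\}}$. Multi-species dynamics on an interval $D$ (state: injective labelling of the sites of $D$ by integers): each nearest-neighbour pair $x,x+1\in D$ independently swaps its values at rate $1$ if the value at $x$ is smaller and at rate $q$ otherwise; on $D=\llbracket -X,X\rrbracket$ with a bijection as state this is the multi-species ASEP on $\llbracket -X,X\rrbracket$. Height function: for $\omega:\llbracket m,n\rrbracket\to\{0,1\}$, $h\{\omega\}:\mathbb Z\to\mathbb Z$ is defined by extending $\omega$ by $0$ on $x<m$ and $1$ on $x>n$, setting $h\{\omega\}(x)=x$ for $x<m$ and $h\{\omega\}(x)-h\{\omega\}(x-1)=1-2\omega(x)$. *)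

theory Defs
  imports "HOL-Analysis.Analysis"
begin

definition perms :: "int \<Rightarrow> int \<Rightarrow> (int \<Rightarrow> int) set" where
  "perms m n = {w. bij_betw w {m..n} {m..n} \<and> (\<forall>x. x \<notin> {m..n} \<longrightarrow> w x = x)}"

definition ninc :: "int \<Rightarrow> int \<Rightarrow> (int \<Rightarrow> int) \<Rightarrow> nat" where
  "ninc m n w = card {(i, j). m \<le> i \<and> i < j \<and> j \<le> n \<and> w i < w j}"

definition mallows :: "real \<Rightarrow> int \<Rightarrow> int \<Rightarrow> (int \<Rightarrow> int) \<Rightarrow> real" where
  "mallows q m n w =
     (if w \<in> perms m n
      then q ^ ninc m n w / (\<Sum>v\<in>perms m n. q ^ ninc m n v) else 0)"

definition swp :: "int \<Rightarrow> (int \<Rightarrow> int) \<Rightarrow> (int \<Rightarrow> int)" where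
  "swp x w = w(x := w (x + 1), x + 1 := w x)"

definition rate :: "real \<Rightarrow> (int \<Rightarrow> int) \<Rightarrow> int \<Rightarrow> real" where
  "rate q w x = (if w x < w (x + 1) then 1 else q)"

text \<open>Generator (forward / Kolmogorov, acting on mass functions) of the multi-species
dynamics on the interval D = [lo,hi].\<close>
definition gen :: "real \<Rightarrow> int \<Rightarrow> int \<Rightarrow> ((int \<Rightarrow> int) \<Rightarrow> real) \<Rightarrow> ((int \<Rightarrow> int) \<Rightarrow> real)" where
  "gen q lo hi \<mu> \<tau> =
     (\<Sum>x\<in>{lo..<hi}. \<mu> (swp x \<tau>) * rate q (swp x \<tau>) x - \<mu> \<tau> * rate q \<tau> x)"

definition evolve :: "real \<Rightarrow> int \<Rightarrow> int \<Rightarrow> ((int \<Rightarrow> int) \<Rightarrow> real) \<Rightarrow> real \<Rightarrow> ((int \<Rightarrow> int) \<Rightarrow> real)" where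
  "evolve q lo hi \<mu> s \<tau> = (\<Sum>n. s ^ n / fact n * ((gen q lo hi ^^ n) \<mu>) \<tau>)"

definition height :: "int \<Rightarrow> int \<Rightarrow> (int \<Rightarrow> int) \<Rightarrow> int \<Rightarrow> int" where
  "height m n \<omega> y =
     (if y < m then y
      else (m - 1) + (\<Sum>x\<in>{m..y}. 1 - 2 * (if x \<le> n then \<omega> x else 1)))"

definition thr :: "int \<Rightarrow> (int \<Rightarrow> int) \<Rightarrow> int \<Rightarrow> int" where
  "thr i \<zeta> x = (if \<zeta> x \<le> i then 1 else 0)"

end

theory Submission
  imports Defs
begin

(* Call the values <= b = -X + k - 1 small and the others big.  A law of the form
   W(tau) * rho(clip b tau), where W(tau) = q ^ (number of increasing pairs of big values) and
   clip b forgets the relative order of the big values, keeps this form under the dynamics on any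
   subinterval: W is reversible for swaps of two big values and blind to swaps involving a small
   one.  The initial Mallows law has this form, hence so have its limit mu0 and the law at time t,
   with rho >= 0 and total mass <= 1.

   On the event, all values at the sites [-X, N-k+a] are big and some site p > N-k+a carries a
   value above k-1-N.  Then j = (number of big values left of p) - (X-k+N) is at least a + 1, and
   at least j of the big values left of p are smaller than the value at p.  Swapping the value at p
   with the largest of them lowers this count and the exponent of W by one, injectively, so under W
   the count is >= j with relative weight at most q^j.  As j increases strictly along the sites
   carrying big values, summing over p gives the bound q^(a+1) / (1 - q). *)

section \<open>Permutations of an interval and increasing pairs of big values\<close>

lemma finite_int_bounded [simp]:
  "finite {i::int. lo \<le> i \<and> i < hi \<and> P i}" "finite {i::int. lo \<le> i \<and> i \<le> hi \<and> P i}"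
  by (rule finite_subset[of _ "{lo..<hi}"] finite_subset[of _ "{lo..hi}"]; auto)+

lemma perms_eq_permutes: "perms m n = {\<tau>. \<tau> permutes {m..n}}"
  unfolding perms_def by (auto intro: bij_imp_permutes permutes_imp_bij permutes_not_in)

lemma finite_perms: "finite (perms m n)"
  by (simp add: perms_eq_permutes finite_permutations)

lemma swp_eq_comp_transpose: "swp x \<tau> = \<tau> \<circ> Transposition.transpose x (x + 1)"
  by (auto simp: swp_def Transposition.transpose_def fun_eq_iff)

lemma swp_swp [simp]: "swp x (swp x \<tau>) = \<tau>"
  by (simp add: swp_eq_comp_transpose swap_nilpotent)

lemma comp_transpose_permutes:
  assumes "\<tau> permutes S" "i \<in> S" "p \<in> S"
  shows "\<tau> \<circ> Transposition.transpose i p permutes S"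
  using permutes_compose[OF permutes_swap_id[OF assms(2,3)] assms(1)] .

lemma swp_in_perms:
  assumes "m \<le> x" "x + 1 \<le> n" "\<tau> \<in> perms m n"
  shows "swp x \<tau> \<in> perms m n"
  using assms by (simp add: perms_eq_permutes swp_eq_comp_transpose comp_transpose_permutes)

lemma swp_in_perms_iff:
  assumes "m \<le> x" "x + 1 \<le> n"
  shows "swp x \<tau> \<in> perms m n \<longleftrightarrow> \<tau> \<in> perms m n"
  using swp_in_perms[OF assms, of \<tau>] swp_in_perms[OF assms, of "swp x \<tau>"] by auto

lemma card_permutes_preimage:
  assumes "\<tau> permutes S"
  shows "card {x \<in> S. P (\<tau> x)} = card {v \<in> S. P v}"
proof -
  have "\<tau> ` {x \<in> S. P (\<tau> x)} = {v \<in> S. P v}"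
    using permutes_image[OF assms] by (auto simp: permutes_in_image[OF assms])
  then show ?thesis
    using card_image[OF permutes_inj_on[OF assms]] by metis
qed

definition ninc_above :: "int \<Rightarrow> int \<Rightarrow> int \<Rightarrow> (int \<Rightarrow> int) \<Rightarrow> nat" where
  "ninc_above m n b \<tau> =
     card {(i, j). m \<le> i \<and> i < j \<and> j \<le> n \<and> b < \<tau> i \<and> b < \<tau> j \<and> \<tau> i < \<tau> j}"

definition ninc_at :: "int \<Rightarrow> int \<Rightarrow> (int \<Rightarrow> int) \<Rightarrow> int \<Rightarrow> nat" where
  "ninc_at m b \<tau> j = card {i. m \<le> i \<and> i < j \<and> b < \<tau> i \<and> b < \<tau> j \<and> \<tau> i < \<tau> j}"

lemma ninc_above_eq_sum_ninc_at: "ninc_above m n b \<tau> = (\<Sum>j\<in>{m..n}. ninc_at m b \<tau> j)"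
proof -
  define L where "L j = {i. m \<le> i \<and> i < j \<and> b < \<tau> i \<and> b < \<tau> j \<and> \<tau> i < \<tau> j}" for j
  have "{(i, j). m \<le> i \<and> i < j \<and> j \<le> n \<and> b < \<tau> i \<and> b < \<tau> j \<and> \<tau> i < \<tau> j}
      = prod.swap ` (SIGMA j:{m..n}. L j)"
    by (force simp: L_def)
  then have "ninc_above m n b \<tau> = card (SIGMA j:{m..n}. L j)"
    unfolding ninc_above_def by (simp add: card_image)
  also have "\<dots> = (\<Sum>j\<in>{m..n}. card (L j))"
    by (rule card_SigmaI) (simp_all add: L_def)
  finally show ?thesis by (simp add: L_def ninc_at_def)
qed

lemma ninc_at_cong:
  assumes "\<And>i. m \<le> i \<Longrightarrow> i \<le> j \<Longrightarrow> \<sigma> i = \<tau> i"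
  shows "ninc_at m b \<sigma> j = ninc_at m b \<tau> j"
proof -
  have "m \<le> j \<Longrightarrow> \<sigma> j = \<tau> j" using assms by simp
  then show ?thesis
    unfolding ninc_at_def using assms by (intro arg_cong[where f = card] Collect_cong) auto
qed

lemma ninc_at_comp_permutes:
  assumes t: "t permutes {m..<j}"
  shows "ninc_at m b (\<tau> \<circ> t) j = ninc_at m b \<tau> j"
proof -
  define A where "A \<sigma> = {i. m \<le> i \<and> i < j \<and> b < \<sigma> i \<and> b < \<sigma> j \<and> \<sigma> i < \<sigma> j}" for \<sigma>
  have tj: "t j = j" using permutes_not_in[OF t] by simp
  have range: "m \<le> t i \<and> t i < j \<longleftrightarrow> m \<le> i \<and> i < j" for i
    using permutes_in_image[OF t, of i] by simp
  have "t ` A (\<tau> \<circ> t) = A \<tau>"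
  proof (intro equalityI subsetI)
    fix i assume "i \<in> A \<tau>"
    then have "inv t i \<in> A (\<tau> \<circ> t)"
      using range[of "inv t i"] permutes_inverses(1)[OF t] by (simp add: A_def tj)
    then show "i \<in> t ` A (\<tau> \<circ> t)"
      using permutes_inverses(1)[OF t] by (metis image_eqI)
  qed (use range in \<open>auto simp: A_def tj\<close>)
  then show ?thesis
    unfolding ninc_at_def A_def[symmetric] using card_image[OF permutes_inj_on[OF t]] by metis
qed

lemma card_int_interval_split:
  fixes m i p :: int
  assumes "m \<le> i" "i < p"
  shows "card {c. m \<le> c \<and> c < p \<and> Q c}
    = card {c. m \<le> c \<and> c < i \<and> Q c} + of_bool (Q i) + card {c. i < c \<and> c < p \<and> Q c}"
proof -
  have split: "{c. m \<le> c \<and> c < p \<and> Q c}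
      = {c. m \<le> c \<and> c < i \<and> Q c} \<union> ({c. c = i \<and> Q c} \<union> {c. i < c \<and> c < p \<and> Q c})"
    using assms by (auto simp: linorder_not_less order_le_less)
  have "finite {c. i < c \<and> c < p \<and> Q c}"
    by (rule finite_subset[of _ "{i<..<p}"]) auto
  moreover have "{c. c = i \<and> Q c} = (if Q i then {i} else {})"
    by auto
  ultimately show ?thesis
    unfolding split by (subst card_Un_disjoint; auto simp: card_Un_disjoint)+
qed

lemma ninc_above_comp_transpose:
  fixes \<tau> :: "int \<Rightarrow> int" and i p :: int
  defines "\<sigma> \<equiv> \<tau> \<circ> Transposition.transpose i p"
  assumes "m \<le> i" "i < p" "p \<le> n"
    and mid: "\<And>c. i < c \<Longrightarrow> c < p \<Longrightarrow> ninc_at m b \<sigma> c = ninc_at m b \<tau> c"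
    and ends: "ninc_at m b \<sigma> i + ninc_at m b \<sigma> p + d = ninc_at m b \<tau> i + ninc_at m b \<tau> p"
  shows "ninc_above m n b \<sigma> + d = ninc_above m n b \<tau>"
proof -
  have rest: "ninc_at m b \<sigma> j = ninc_at m b \<tau> j" if j: "j \<in> {m..n} - {i, p}" for j
  proof -
    consider "j < i" | "i < j \<and> j < p" | "p < j" using j by (simp, linarith)
    then show ?thesis
    proof cases
      case 1
      then show ?thesis
        unfolding \<sigma>_def using assms(3) by (intro ninc_at_cong) (simp add: Transposition.transpose_def)
    next
      case 2
      then show ?thesis using mid by blast
    next
      case 3
      then have "Transposition.transpose i p permutes {m..<j}"
        using assms(2,3) by (intro permutes_swap_id) auto
      then show ?thesis unfolding \<sigma>_def by (rule ninc_at_comp_permutes)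
    qed
  qed
  have split: "(\<Sum>j\<in>{m..n}. f j) = f i + f p + (\<Sum>j\<in>{m..n} - {i, p}. f j)" for f :: "int \<Rightarrow> nat"
    using assms(2-4) by (simp add: sum.remove[of _ i] sum.remove[of _ p] Diff_insert2[symmetric])
  show ?thesis
    unfolding ninc_above_eq_sum_ninc_at split using ends rest by simp
qed

lemma ninc_at_transpose_between:
  fixes \<tau> :: "int \<Rightarrow> int" and i p c :: int
  defines "\<sigma> \<equiv> \<tau> \<circ> Transposition.transpose i p"
  assumes "i < c" "c < p" "b < \<tau> i" "\<tau> i < \<tau> p"
    and gap: "b < \<tau> c \<Longrightarrow> \<tau> c < \<tau> i \<or> \<tau> p < \<tau> c"
  shows "ninc_at m b \<sigma> c = ninc_at m b \<tau> c"
proof -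
  have \<sigma>: "\<sigma> i = \<tau> p" "\<sigma> c = \<tau> c" "\<And>c'. c' < c \<Longrightarrow> c' \<noteq> i \<Longrightarrow> \<sigma> c' = \<tau> c'"
    using assms(2,3) by (auto simp: \<sigma>_def Transposition.transpose_def)
  have "b < \<sigma> c' \<and> b < \<sigma> c \<and> \<sigma> c' < \<sigma> c \<longleftrightarrow> b < \<tau> c' \<and> b < \<tau> c \<and> \<tau> c' < \<tau> c"
    if "c' < c" for c'
  proof (cases "c' = i")
    case True
    then show ?thesis using \<sigma>(1,2) assms(4,5) gap by auto
  qed (use \<sigma> that in simp)
  then show ?thesis
    unfolding ninc_at_def by (intro arg_cong[where f = card] Collect_cong) auto
qed

lemma ninc_at_transpose_ends:
  fixes \<tau> :: "int \<Rightarrow> int" and i p :: int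
  defines "\<sigma> \<equiv> \<tau> \<circ> Transposition.transpose i p"
  assumes "m \<le> i" "i < p" "b < \<tau> i" "\<tau> i < \<tau> p"
    and gap: "\<And>c. i < c \<Longrightarrow> c < p \<Longrightarrow> b < \<tau> c \<Longrightarrow> \<tau> c < \<tau> i \<or> \<tau> p < \<tau> c"
  shows "ninc_at m b \<sigma> i + ninc_at m b \<sigma> p + 1 = ninc_at m b \<tau> i + ninc_at m b \<tau> p"
proof -
  define A where "A v = card {c. m \<le> c \<and> c < i \<and> b < \<tau> c \<and> \<tau> c < v}" for v
  define M where "M v = card {c. i < c \<and> c < p \<and> b < \<tau> c \<and> \<tau> c < v}" for v
  have \<sigma>: "\<sigma> i = \<tau> p" "\<sigma> p = \<tau> i" "\<And>c. c < i \<Longrightarrow> \<sigma> c = \<tau> c"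
    "\<And>c. i < c \<Longrightarrow> c < p \<Longrightarrow> \<sigma> c = \<tau> c"
    using assms(3) by (simp_all add: \<sigma>_def Transposition.transpose_def)
  have "ninc_at m b \<tau> i = A (\<tau> i)"
    unfolding ninc_at_def A_def using assms(4) by (intro arg_cong[where f = card] Collect_cong) auto
  moreover have "ninc_at m b \<sigma> i = A (\<tau> p)"
    unfolding ninc_at_def A_def using assms(3-5) \<sigma>
    by (intro arg_cong[where f = card] Collect_cong) auto
  moreover have "ninc_at m b \<tau> p = A (\<tau> p) + 1 + M (\<tau> p)"
    unfolding ninc_at_def A_def M_def using assms(4,5)
    by (subst card_int_interval_split[OF assms(2,3)]) (auto intro!: arg_cong[where f = card])
  moreover have "ninc_at m b \<sigma> p = A (\<tau> i) + 0 + M (\<tau> i)"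
  proof -
    have "{c. m \<le> c \<and> c < i \<and> b < \<sigma> c \<and> \<sigma> c < \<tau> i} = {c. m \<le> c \<and> c < i \<and> b < \<tau> c \<and> \<tau> c < \<tau> i}"
      "{c. i < c \<and> c < p \<and> b < \<sigma> c \<and> \<sigma> c < \<tau> i} = {c. i < c \<and> c < p \<and> b < \<tau> c \<and> \<tau> c < \<tau> i}"
      using \<sigma>(3,4) by auto
    then show ?thesis
      unfolding ninc_at_def A_def M_def using assms(4,5) \<sigma>(1,2)
      by (subst card_int_interval_split[OF assms(2,3)]) auto
  qed
  moreover have "M (\<tau> i) = M (\<tau> p)"
    unfolding M_def using assms(5) gap by (intro arg_cong[where f = card] Collect_cong) force
  ultimately show ?thesis by simp
qed

lemma ninc_above_transpose_big:
  assumes "m \<le> i" "i < p" "p \<le> n" "b < \<tau> i" "\<tau> i < \<tau> p"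
    and gap: "\<And>c. i < c \<Longrightarrow> c < p \<Longrightarrow> b < \<tau> c \<Longrightarrow> \<tau> c < \<tau> i \<or> \<tau> p < \<tau> c"
  shows "ninc_above m n b (\<tau> \<circ> Transposition.transpose i p) + 1 = ninc_above m n b \<tau>"
  using assms by (intro ninc_above_comp_transpose ninc_at_transpose_between ninc_at_transpose_ends)

lemma ninc_above_swp_big:
  assumes "m \<le> x" "x + 1 \<le> n" "b < \<tau> x" "\<tau> x < \<tau> (x + 1)"
  shows "ninc_above m n b (swp x \<tau>) + 1 = ninc_above m n b \<tau>"
  unfolding swp_eq_comp_transpose using assms by (intro ninc_above_transpose_big) auto

lemma ninc_above_swp_small:
  assumes "m \<le> x" "x + 1 \<le> n" "\<tau> x \<le> b \<or> \<tau> (x + 1) \<le> b"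
  shows "ninc_above m n b (swp x \<tau>) = ninc_above m n b \<tau>"
proof -
  have left_small: "ninc_above m n b (swp x \<tau>) = ninc_above m n b \<tau>" if small: "\<tau> x \<le> b" for \<tau>
  proof -
    let ?\<sigma> = "\<tau> \<circ> Transposition.transpose x (x + 1)"
    have \<sigma>: "?\<sigma> x = \<tau> (x + 1)" "?\<sigma> (x + 1) = \<tau> x" "\<And>c. c < x \<Longrightarrow> ?\<sigma> c = \<tau> c"
      by (simp_all add: Transposition.transpose_def)
    have "m \<le> c \<and> c < x \<and> b < ?\<sigma> c \<and> b < ?\<sigma> x \<and> ?\<sigma> c < ?\<sigma> x \<longleftrightarrow>
        m \<le> c \<and> c < x + 1 \<and> b < \<tau> c \<and> b < \<tau> (x + 1) \<and> \<tau> c < \<tau> (x + 1)" for c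
      using small \<sigma> by (cases "c < x") (auto simp del: comp_apply)
    then have "ninc_at m b ?\<sigma> x = ninc_at m b \<tau> (x + 1)"
      unfolding ninc_at_def by presburger
    moreover have "ninc_at m b \<tau> x = 0" "ninc_at m b ?\<sigma> (x + 1) = 0"
      unfolding ninc_at_def using small \<sigma>(2) by auto
    ultimately show ?thesis
      unfolding swp_eq_comp_transpose using assms(1,2)
      by (intro ninc_above_comp_transpose[where d = 0, simplified]) auto
  qed
  show ?thesis
  proof (cases "\<tau> x \<le> b")
    case False
    then have "swp x \<tau> x \<le> b" using assms(3) by (simp add: swp_def)
    from left_small[of "swp x \<tau>", OF this] show ?thesis by simp
  qed (rule left_small)
qed

section \<open>The generator and its semigroup\<close>

lemma rate_bounds: "0 \<le> q \<Longrightarrow> q \<le> 1 \<Longrightarrow> 0 \<le> rate q w x \<and> rate q w x \<le> 1"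
  unfolding rate_def by auto

lemma gen_sum: "gen q lo hi (\<lambda>\<tau>. \<Sum>j\<in>J. c j * f j \<tau>) \<tau> = (\<Sum>j\<in>J. c j * gen q lo hi (f j) \<tau>)"
  unfolding gen_def
  by (simp add: sum_distrib_left sum_distrib_right right_diff_distrib sum_subtractf mult.assoc
      sum.swap[of _ J])

lemma abs_gen_le:
  fixes M :: real
  assumes q: "0 \<le> q" "q \<le> 1" and \<mu>: "\<And>\<tau>. \<bar>\<mu> \<tau>\<bar> \<le> M"
  shows "\<bar>gen q lo hi \<mu> \<tau>\<bar> \<le> 2 * real (card {lo..<hi}) * M"
proof -
  have rate_term: "\<bar>\<mu> \<tau>' * rate q \<tau>' x\<bar> \<le> M" for \<tau>' x
    using \<mu>[of \<tau>'] rate_bounds[OF q, of \<tau>' x]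
    by (simp add: abs_mult) (metis abs_ge_zero mult_right_le_one_le order_trans)
  have "\<bar>gen q lo hi \<mu> \<tau>\<bar>
      \<le> (\<Sum>x\<in>{lo..<hi}. \<bar>\<mu> (swp x \<tau>) * rate q (swp x \<tau>) x - \<mu> \<tau> * rate q \<tau> x\<bar>)"
    unfolding gen_def by (rule sum_abs)
  also have "\<dots> \<le> (\<Sum>x\<in>{lo..<hi}. 2 * M)"
  proof (rule sum_mono)
    fix x
    show "\<bar>\<mu> (swp x \<tau>) * rate q (swp x \<tau>) x - \<mu> \<tau> * rate q \<tau> x\<bar> \<le> 2 * M"
      using rate_term[of "swp x \<tau>" x] rate_term[of \<tau> x] by linarith
  qed
  finally show ?thesis by simp
qed

lemma abs_funpow_le:
  fixes T :: "('a \<Rightarrow> real) \<Rightarrow> 'a \<Rightarrow> real"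
  assumes T: "\<And>\<nu> M x. (\<And>y. \<bar>\<nu> y\<bar> \<le> M) \<Longrightarrow> \<bar>T \<nu> x\<bar> \<le> K * M"
    and \<mu>: "\<And>y. \<bar>\<mu> y\<bar> \<le> M"
  shows "\<bar>(T ^^ n) \<mu> x\<bar> \<le> K ^ n * M"
proof (induction n arbitrary: x)
  case 0
  show ?case using \<mu> by simp
next
  case (Suc n)
  show ?case using T[OF Suc.IH] by (simp add: mult.assoc)
qed

lemma summable_exp_series_bound:
  fixes a :: "nat \<Rightarrow> real"
  assumes "\<And>n. \<bar>a n\<bar> \<le> K ^ n * M"
  shows "summable (\<lambda>n. \<bar>s ^ n / fact n * a n\<bar>)"
proof (rule summable_comparison_test')
  show "summable (\<lambda>n. inverse (fact n) * (\<bar>s\<bar> * K) ^ n * M)"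
    by (intro summable_mult2 summable_exp)
  show "norm \<bar>s ^ n / fact n * a n\<bar> \<le> inverse (fact n) * (\<bar>s\<bar> * K) ^ n * M" for n
    using mult_left_mono[OF assms[of n], of "\<bar>s\<bar> ^ n / fact n"]
    by (simp add: abs_mult power_abs power_mult_distrib divide_inverse mult_ac)
qed

lemma summable_evolve:
  assumes "0 \<le> q" "q \<le> 1" "\<And>\<tau>. \<bar>\<mu> \<tau>\<bar> \<le> M"
  shows "summable (\<lambda>n. s ^ n / fact n * (gen q lo hi ^^ n) \<mu> \<tau>)"
  using summable_exp_series_bound[OF abs_funpow_le[OF abs_gen_le[OF assms(1,2)] assms(3)]]
  by (rule summable_rabs_cancel)

lemma sum_gen_perms:
  assumes "m \<le> lo" "hi \<le> n"
  shows "(\<Sum>\<tau>\<in>perms m n. gen q lo hi \<mu> \<tau>) = 0"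
proof -
  have "(\<Sum>\<tau>\<in>perms m n. \<mu> (swp x \<tau>) * rate q (swp x \<tau>) x) = (\<Sum>\<tau>\<in>perms m n. \<mu> \<tau> * rate q \<tau> x)"
    if "x \<in> {lo..<hi}" for x
    using that assms
    by (intro sum.reindex_bij_witness[where i = "swp x" and j = "swp x"]) (auto simp: swp_in_perms)
  then show ?thesis
    unfolding gen_def by (subst sum.swap) (simp add: sum_subtractf)
qed

lemma sum_evolve_perms:
  assumes "0 \<le> q" "q \<le> 1" "m \<le> lo" "hi \<le> n" "\<And>\<tau>. \<bar>\<mu> \<tau>\<bar> \<le> M"
  shows "(\<Sum>\<tau>\<in>perms m n. evolve q lo hi \<mu> s \<tau>) = (\<Sum>\<tau>\<in>perms m n. \<mu> \<tau>)"
proof -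
  have "(\<Sum>\<tau>\<in>perms m n. evolve q lo hi \<mu> s \<tau>)
      = (\<Sum>k. \<Sum>\<tau>\<in>perms m n. s ^ k / fact k * (gen q lo hi ^^ k) \<mu> \<tau>)"
    unfolding evolve_def by (rule suminf_sum[symmetric]) (rule summable_evolve[OF assms(1,2,5)])
  also have "\<dots> = (\<Sum>k\<in>{0}. \<Sum>\<tau>\<in>perms m n. s ^ k / fact k * (gen q lo hi ^^ k) \<mu> \<tau>)"
  proof (rule suminf_finite)
    fix k :: nat assume "k \<notin> {0}"
    then obtain j where k: "k = Suc j" by (cases k) auto
    have "(\<Sum>\<tau>\<in>perms m n. s ^ k / fact k * (gen q lo hi ^^ k) \<mu> \<tau>)
        = s ^ k / fact k * (\<Sum>\<tau>\<in>perms m n. gen q lo hi ((gen q lo hi ^^ j) \<mu>) \<tau>)"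
      by (simp add: k sum_distrib_left)
    then show "(\<Sum>\<tau>\<in>perms m n. s ^ k / fact k * (gen q lo hi ^^ k) \<mu> \<tau>) = 0"
      by (simp add: sum_gen_perms[OF assms(3,4)])
  qed simp
  finally show ?thesis by simp
qed

(* Uniformization: adding the bound L = card {lo..<hi} on the total jump rate to the generator
   gives an operator preserving nonnegativity, and the semigroup is its exponential damped by
   exp (- L s). *)

definition gen_shifted :: "real \<Rightarrow> int \<Rightarrow> int \<Rightarrow> ((int \<Rightarrow> int) \<Rightarrow> real) \<Rightarrow> (int \<Rightarrow> int) \<Rightarrow> real" where
  "gen_shifted q lo hi \<mu> \<tau> = gen q lo hi \<mu> \<tau> + real (card {lo..<hi}) * \<mu> \<tau>"

lemma gen_shifted_nonneg:
  assumes q: "0 \<le> q" "q \<le> 1" and \<mu>: "\<And>\<tau>. 0 \<le> \<mu> \<tau>"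
  shows "0 \<le> gen_shifted q lo hi \<mu> \<tau>"
proof -
  have "- \<mu> \<tau> \<le> \<mu> (swp x \<tau>) * rate q (swp x \<tau>) x - \<mu> \<tau> * rate q \<tau> x" for x
    using \<mu>[of "swp x \<tau>"] \<mu>[of \<tau>] rate_bounds[OF q, of "swp x \<tau>" x] rate_bounds[OF q, of \<tau> x]
    by (smt (verit) mult_left_le mult_nonneg_nonneg)
  then have "(\<Sum>x\<in>{lo..<hi}. - \<mu> \<tau>) \<le> gen q lo hi \<mu> \<tau>"
    unfolding gen_def by (rule sum_mono)
  then show ?thesis
    unfolding gen_shifted_def by simp
qed

lemma abs_gen_shifted_le:
  fixes M :: real
  assumes "0 \<le> q" "q \<le> 1" "\<And>\<tau>. \<bar>\<mu> \<tau>\<bar> \<le> M"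
  shows "\<bar>gen_shifted q lo hi \<mu> \<tau>\<bar> \<le> 3 * real (card {lo..<hi}) * M"
proof -
  have "\<bar>real (card {lo..<hi}) * \<mu> \<tau>\<bar> \<le> real (card {lo..<hi}) * M"
    using assms(3) by (simp add: abs_mult mult_left_mono)
  then show ?thesis
    unfolding gen_shifted_def
    using abs_gen_le[where \<mu> = \<mu> and lo = lo and hi = hi and \<tau> = \<tau>, OF assms]
      abs_triangle_ineq[of "gen q lo hi \<mu> \<tau>" "real (card {lo..<hi}) * \<mu> \<tau>"]
    by linarith
qed

lemma sum_binomial_Suc:
  fixes A :: "nat \<Rightarrow> real"
  shows "(\<Sum>k\<le>Suc n. real (Suc n choose k) * c ^ (Suc n - k) * A k)
    = (\<Sum>k\<le>n. real (n choose k) * c ^ (n - k) * A (Suc k))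
      + c * (\<Sum>k\<le>n. real (n choose k) * c ^ (n - k) * A k)"
proof -
  have "c * (\<Sum>k\<le>n. real (n choose k) * c ^ (n - k) * A k)
      = (\<Sum>k\<le>Suc n. real (n choose k) * c ^ (Suc n - k) * A k)"
    by (simp add: sum_distrib_left Suc_diff_le mult_ac)
  also have "\<dots> = c ^ Suc n * A 0 + (\<Sum>k\<le>n. real (n choose Suc k) * c ^ (n - k) * A (Suc k))"
    by (subst sum.atMost_Suc_shift) simp
  finally show ?thesis
    by (subst sum.atMost_Suc_shift) (simp add: sum.distrib algebra_simps)
qed

lemma gen_power_binomial:
  "(gen q lo hi ^^ n) \<mu> \<tau>
    = (\<Sum>k\<le>n. real (n choose k) * (- real (card {lo..<hi})) ^ (n - k) * (gen_shifted q lo hi ^^ k) \<mu> \<tau>)"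
proof (induction n arbitrary: \<tau>)
  case 0
  show ?case by simp
next
  case (Suc n)
  define c where "c = - real (card {lo..<hi})"
  define B where "B k = (gen_shifted q lo hi ^^ k) \<mu>" for k
  have gen_B: "gen q lo hi (B k) \<tau> = B (Suc k) \<tau> + c * B k \<tau>" for k
    by (simp add: gen_shifted_def c_def B_def)
  have "(gen q lo hi ^^ n) \<mu> = (\<lambda>\<tau>. \<Sum>k\<le>n. real (n choose k) * c ^ (n - k) * B k \<tau>)"
    using Suc.IH unfolding c_def B_def by (rule ext)
  then have "(gen q lo hi ^^ Suc n) \<mu> \<tau>
      = gen q lo hi (\<lambda>\<tau>. \<Sum>k\<le>n. real (n choose k) * c ^ (n - k) * B k \<tau>) \<tau>"
    by simp
  also have "\<dots> = (\<Sum>k\<le>n. real (n choose k) * c ^ (n - k) * gen q lo hi (B k) \<tau>)"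
    by (rule gen_sum)
  also have "\<dots> = (\<Sum>k\<le>n. real (n choose k) * c ^ (n - k) * B (Suc k) \<tau>
      + c * (real (n choose k) * c ^ (n - k) * B k \<tau>))"
    unfolding gen_B by (simp only: distrib_left mult_ac)
  also have "\<dots> = (\<Sum>k\<le>n. real (n choose k) * c ^ (n - k) * B (Suc k) \<tau>)
      + c * (\<Sum>k\<le>n. real (n choose k) * c ^ (n - k) * B k \<tau>)"
    by (simp only: sum.distrib sum_distrib_left)
  also have "\<dots> = (\<Sum>k\<le>Suc n. real (Suc n choose k) * c ^ (Suc n - k) * B k \<tau>)"
    by (rule sum_binomial_Suc[symmetric])
  finally show ?case unfolding c_def B_def .
qed

lemma evolve_eq_uniformized:
  assumes "0 \<le> q" "q \<le> 1" "\<And>\<tau>. \<bar>\<mu> \<tau>\<bar> \<le> M"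
  shows "evolve q lo hi \<mu> s \<tau>
    = (\<Sum>k. s ^ k / fact k * (gen_shifted q lo hi ^^ k) \<mu> \<tau>) * exp (- real (card {lo..<hi}) * s)"
proof -
  define c where "c = - real (card {lo..<hi})"
  define a where "a k = s ^ k / fact k * (gen_shifted q lo hi ^^ k) \<mu> \<tau>" for k
  define e where "e k = (c * s) ^ k / fact k" for k
  have "summable (\<lambda>k. norm (a k))"
    unfolding a_def real_norm_def
    by (rule summable_exp_series_bound[OF abs_funpow_le[OF abs_gen_shifted_le[OF assms(1,2)] assms(3)]])
  moreover have "summable (\<lambda>k. norm (e k))"
    unfolding e_def real_norm_def
    using summable_exp_series_bound[where a = "\<lambda>_. 1" and K = 1 and M = 1 and s = "c * s"] by simp
  ultimately have cauchy: "(\<Sum>k. a k) * (\<Sum>k. e k) = (\<Sum>n. \<Sum>k\<le>n. a k * e (n - k))"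
    by (rule Cauchy_product)
  have "(\<Sum>k\<le>n. a k * e (n - k)) = s ^ n / fact n * (gen q lo hi ^^ n) \<mu> \<tau>" for n
  proof -
    have term_eq: "a k * e (n - k)
        = s ^ n / fact n * (real (n choose k) * c ^ (n - k) * (gen_shifted q lo hi ^^ k) \<mu> \<tau>)"
      if "k \<le> n" for k
    proof -
      have "s ^ n = s ^ k * s ^ (n - k)" using that by (simp flip: power_add)
      then show ?thesis
        by (simp add: a_def e_def binomial_fact[OF that] power_mult_distrib)
    qed
    show ?thesis
      unfolding gen_power_binomial c_def[symmetric] sum_distrib_left
      by (intro sum.cong refl) (simp add: term_eq)
  qed
  then have "evolve q lo hi \<mu> s \<tau> = (\<Sum>k. a k) * (\<Sum>k. e k)"
    unfolding evolve_def cauchy by simp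
  moreover have "(\<Sum>k. e k) = exp (c * s)"
    using exp_converges[of "c * s"] unfolding e_def by (simp add: sums_iff divide_inverse mult.commute)
  ultimately show ?thesis
    unfolding a_def c_def by simp
qed

lemma evolve_nonneg:
  assumes q: "0 \<le> q" "q \<le> 1" and \<mu>: "\<And>\<tau>. 0 \<le> \<mu> \<tau>" "\<And>\<tau>. \<bar>\<mu> \<tau>\<bar> \<le> M" and "0 \<le> s"
  shows "0 \<le> evolve q lo hi \<mu> s \<tau>"
proof -
  have "0 \<le> (gen_shifted q lo hi ^^ k) \<mu> \<tau>" for k
  proof (induction k arbitrary: \<tau>)
    case (Suc k)
    then show ?case using gen_shifted_nonneg[OF q] by simp
  qed (simp add: \<mu>)
  moreover have "summable (\<lambda>k. s ^ k / fact k * (gen_shifted q lo hi ^^ k) \<mu> \<tau>)"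
    using summable_exp_series_bound[OF abs_funpow_le[OF abs_gen_shifted_le[OF q] \<mu>(2)]]
    by (rule summable_rabs_cancel)
  ultimately show ?thesis
    unfolding evolve_eq_uniformized[OF q \<mu>(2)] using \<open>0 \<le> s\<close>
    by (intro mult_nonneg_nonneg suminf_nonneg) auto
qed

section \<open>Laws of product form\<close>

definition clip :: "int \<Rightarrow> (int \<Rightarrow> int) \<Rightarrow> int \<Rightarrow> int" where
  "clip b \<tau> = (\<lambda>x. min (\<tau> x) (b + 1))"

definition mallows_weight :: "real \<Rightarrow> int \<Rightarrow> int \<Rightarrow> int \<Rightarrow> (int \<Rightarrow> int) \<Rightarrow> real" where
  "mallows_weight q m n b \<tau> = (if \<tau> \<in> perms m n then q ^ ninc_above m n b \<tau> else 0)"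

lemma mallows_weight_nonneg: "0 \<le> q \<Longrightarrow> 0 \<le> mallows_weight q m n b \<tau>"
  unfolding mallows_weight_def by simp

lemma mallows_weight_le_1: "0 \<le> q \<Longrightarrow> q \<le> 1 \<Longrightarrow> mallows_weight q m n b \<tau> \<le> 1"
  unfolding mallows_weight_def by (simp add: power_le_one)

lemma clip_swp: "clip b (swp x \<tau>) = swp x (clip b \<tau>)"
  unfolding clip_def swp_def by auto

lemma rate_clip: "\<tau> x \<le> b \<or> \<tau> (x + 1) \<le> b \<Longrightarrow> rate q (clip b \<tau>) x = rate q \<tau> x"
  unfolding rate_def clip_def by auto

lemma mallows_weight_swp_small:
  assumes "m \<le> x" "x + 1 \<le> n" "\<tau> x \<le> b \<or> \<tau> (x + 1) \<le> b"
  shows "mallows_weight q m n b (swp x \<tau>) = mallows_weight q m n b \<tau>"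
  unfolding mallows_weight_def swp_in_perms_iff[OF assms(1,2)] ninc_above_swp_small[OF assms] ..

lemma mallows_weight_swp_big:
  assumes "m \<le> x" "x + 1 \<le> n" "b < \<tau> x" "b < \<tau> (x + 1)"
  shows "mallows_weight q m n b (swp x \<tau>) * rate q (swp x \<tau>) x = mallows_weight q m n b \<tau> * rate q \<tau> x"
proof -
  have increasing: "mallows_weight q m n b (swp x \<tau>) * rate q (swp x \<tau>) x = mallows_weight q m n b \<tau> * rate q \<tau> x"
    if "b < \<tau> x" "\<tau> x < \<tau> (x + 1)" for \<tau>
  proof -
    have "ninc_above m n b \<tau> = Suc (ninc_above m n b (swp x \<tau>))"
      using ninc_above_swp_big[OF assms(1,2) that] by simp
    moreover have "rate q (swp x \<tau>) x = q" "rate q \<tau> x = 1"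
      using that by (simp_all add: rate_def swp_def)
    ultimately show ?thesis
      by (simp add: mallows_weight_def swp_in_perms_iff[OF assms(1,2)])
  qed
  show ?thesis
  proof (cases "\<tau> x < \<tau> (x + 1)")
    case True
    then show ?thesis using increasing assms(3) by blast
  next
    case False
    show ?thesis
    proof (cases "\<tau> \<in> perms m n")
      case True
      then have "inj \<tau>" by (simp add: perms_eq_permutes permutes_inj)
      then have "\<tau> x \<noteq> \<tau> (x + 1)" by (simp add: inj_eq)
      then show ?thesis
        using increasing[of "swp x \<tau>"] False assms(4) by (simp add: swp_def)
    qed (simp add: mallows_weight_def swp_in_perms_iff[OF assms(1,2)])
  qed
qed

lemma gen_product_form:
  assumes "m \<le> lo" "hi \<le> n"
  shows "gen q lo hi (\<lambda>\<tau>. mallows_weight q m n b \<tau> * \<rho> (clip b \<tau>)) \<tau>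
    = mallows_weight q m n b \<tau> * gen q lo hi \<rho> (clip b \<tau>)"
  unfolding gen_def sum_distrib_left
proof (rule sum.cong[OF refl])
  fix x assume "x \<in> {lo..<hi}"
  then have x: "m \<le> x" "x + 1 \<le> n" using assms by auto
  let ?W = "mallows_weight q m n b"
  show "?W (swp x \<tau>) * \<rho> (clip b (swp x \<tau>)) * rate q (swp x \<tau>) x - ?W \<tau> * \<rho> (clip b \<tau>) * rate q \<tau> x
    = ?W \<tau> * (\<rho> (swp x (clip b \<tau>)) * rate q (swp x (clip b \<tau>)) x - \<rho> (clip b \<tau>) * rate q (clip b \<tau>) x)"
  proof (cases "b < \<tau> x \<and> b < \<tau> (x + 1)")
    case True
    then have "swp x (clip b \<tau>) = clip b \<tau>"
      by (auto simp: swp_def clip_def fun_eq_iff)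
    with True show ?thesis
      using mallows_weight_swp_big[OF x, where \<tau> = \<tau>] by (simp add: clip_swp algebra_simps)
  next
    case False
    then have small: "\<tau> x \<le> b \<or> \<tau> (x + 1) \<le> b" by auto
    moreover have "swp x \<tau> x \<le> b \<or> swp x \<tau> (x + 1) \<le> b"
      using small by (auto simp: swp_def)
    ultimately show ?thesis
      using mallows_weight_swp_small[OF x small] rate_clip[of \<tau> x b q] rate_clip[of "swp x \<tau>" x b q]
      by (simp add: clip_swp algebra_simps)
  qed
qed

lemma gen_power_product_form:
  assumes "m \<le> lo" "hi \<le> n"
  shows "(gen q lo hi ^^ k) (\<lambda>\<tau>. mallows_weight q m n b \<tau> * \<rho> (clip b \<tau>))
    = (\<lambda>\<tau>. mallows_weight q m n b \<tau> * (gen q lo hi ^^ k) \<rho> (clip b \<tau>))"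
  by (induction k) (simp_all add: gen_product_form[OF assms])

lemma evolve_product_form:
  assumes "0 \<le> q" "q \<le> 1" "m \<le> lo" "hi \<le> n" "\<And>c. \<bar>\<rho> c\<bar> \<le> M"
  shows "evolve q lo hi (\<lambda>\<tau>. mallows_weight q m n b \<tau> * \<rho> (clip b \<tau>)) s
    = (\<lambda>\<tau>. mallows_weight q m n b \<tau> * evolve q lo hi \<rho> s (clip b \<tau>))"
proof
  fix \<tau>
  show "evolve q lo hi (\<lambda>\<tau>. mallows_weight q m n b \<tau> * \<rho> (clip b \<tau>)) s \<tau>
    = mallows_weight q m n b \<tau> * evolve q lo hi \<rho> s (clip b \<tau>)"
    unfolding evolve_def gen_power_product_form[OF assms(3,4)]
    using suminf_mult[OF summable_evolve[OF assms(1,2,5)], of "mallows_weight q m n b \<tau>"]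
    by (simp add: mult_ac)
qed

lemma tendsto_product_form:
  fixes W \<mu> :: "'a \<Rightarrow> real" and \<beta> :: "'a \<Rightarrow> 'b" and f :: "'c \<Rightarrow> 'b \<Rightarrow> real"
  assumes F: "F \<noteq> bot" and fin: "finite {\<tau>. W \<tau> \<noteq> 0}"
    and W: "\<And>\<tau>. 0 \<le> W \<tau>" and \<mu>: "\<And>\<tau>. 0 \<le> \<mu> \<tau>"
    and lim: "\<And>\<tau>. ((\<lambda>s. W \<tau> * f s (\<beta> \<tau>)) \<longlongrightarrow> \<mu> \<tau>) F"
  obtains \<rho> M where "\<mu> = (\<lambda>\<tau>. W \<tau> * \<rho> (\<beta> \<tau>))" "\<And>c. 0 \<le> \<rho> c" "\<And>c. \<bar>\<rho> c\<bar> \<le> M"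
proof -
  define S where "S = {\<tau>. W \<tau> \<noteq> 0}"
  define \<rho> where "\<rho> c = (if \<exists>\<sigma>\<in>S. \<beta> \<sigma> = c
    then \<mu> (SOME \<sigma>. \<sigma> \<in> S \<and> \<beta> \<sigma> = c) / W (SOME \<sigma>. \<sigma> \<in> S \<and> \<beta> \<sigma> = c) else 0)" for c
  have lim_S: "((\<lambda>s. f s (\<beta> \<tau>)) \<longlongrightarrow> \<mu> \<tau> / W \<tau>) F" if "\<tau> \<in> S" for \<tau>
  proof -
    have "((\<lambda>s. W \<tau> * f s (\<beta> \<tau>) / W \<tau>) \<longlongrightarrow> \<mu> \<tau> / W \<tau>) F"
      using that by (intro tendsto_divide lim tendsto_const) (simp add: S_def)
    then show ?thesis using that by (simp add: S_def)
  qed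
  have \<rho>_S: "\<rho> (\<beta> \<tau>) = \<mu> \<tau> / W \<tau>" if "\<tau> \<in> S" for \<tau>
  proof -
    define \<sigma> where "\<sigma> = (SOME \<sigma>. \<sigma> \<in> S \<and> \<beta> \<sigma> = \<beta> \<tau>)"
    have \<sigma>: "\<sigma> \<in> S" "\<beta> \<sigma> = \<beta> \<tau>"
      using someI[of "\<lambda>\<sigma>. \<sigma> \<in> S \<and> \<beta> \<sigma> = \<beta> \<tau>", OF conjI[OF that refl]] by (simp_all add: \<sigma>_def)
    have "\<mu> \<sigma> / W \<sigma> = \<mu> \<tau> / W \<tau>"
      using tendsto_unique[OF F lim_S[OF \<sigma>(1), unfolded \<sigma>(2)] lim_S[OF that]] .
    then show ?thesis using that by (auto simp: \<rho>_def \<sigma>_def)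
  qed
  have "\<mu> \<tau> = W \<tau> * \<rho> (\<beta> \<tau>)" for \<tau>
  proof (cases "\<tau> \<in> S")
    case False
    then have "((\<lambda>s. 0) \<longlongrightarrow> \<mu> \<tau>) F" using lim[of \<tau>] by (simp add: S_def)
    then show ?thesis using False tendsto_unique[OF F _ tendsto_const] by (fastforce simp: S_def)
  qed (simp add: \<rho>_S S_def)
  moreover have "0 \<le> \<rho> c" for c
    unfolding \<rho>_def using W \<mu> by simp
  moreover have "\<bar>\<rho> c\<bar> \<le> (\<Sum>\<sigma>\<in>S. \<mu> \<sigma> / W \<sigma>)" for c
  proof (cases "\<exists>\<sigma>\<in>S. \<beta> \<sigma> = c")
    case True
    then obtain \<sigma> where "\<sigma> \<in> S" "c = \<beta> \<sigma>" by blast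
    then show ?thesis
      using fin W \<mu> \<rho>_S[of \<sigma>] by (simp add: S_def) (intro member_le_sum, auto)
  qed (use W \<mu> in \<open>auto simp: \<rho>_def intro: sum_nonneg\<close>)
  ultimately show ?thesis using that[of \<rho>] by blast
qed

lemma perms_iff_clip:
  assumes "m \<le> m'"
  shows "\<tau> \<in> perms m' n \<longleftrightarrow> \<tau> \<in> perms m n \<and> clip (m' - 1) \<tau> = clip (m' - 1) id"
proof
  assume \<tau>: "\<tau> \<in> perms m' n"
  then have perm: "\<tau> permutes {m'..n}" by (simp add: perms_eq_permutes)
  have "\<tau> permutes {m..n}"
    using assms by (intro permutes_subset[OF perm]) auto
  moreover have "min (\<tau> x) m' = min x m'" for x
    using permutes_not_in[OF perm, of x] permutes_in_image[OF perm, of x]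
    by (cases "x \<in> {m'..n}") auto
  ultimately show "\<tau> \<in> perms m n \<and> clip (m' - 1) \<tau> = clip (m' - 1) id"
    by (simp add: perms_eq_permutes clip_def)
next
  assume "\<tau> \<in> perms m n \<and> clip (m' - 1) \<tau> = clip (m' - 1) id"
  then have perm: "\<tau> permutes {m..n}" and clip: "\<And>x. min (\<tau> x) m' = min x m'"
    by (auto simp: perms_eq_permutes clip_def fun_eq_iff)
  have "\<tau> x = x" if "x \<notin> {m'..n}" for x
  proof (cases "x < m'")
    case True
    then show ?thesis using clip[of x] by (simp add: min_def split: if_splits)
  qed (use that permutes_not_in[OF perm] in auto)
  then show "\<tau> \<in> perms m' n"
    using perm by (simp add: perms_eq_permutes permutes_def)
qed

lemma ninc_above_eq_ninc:
  assumes "m \<le> m'" "\<tau> \<in> perms m' n"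
  shows "ninc_above m n (m' - 1) \<tau> = ninc m' n \<tau>"
proof -
  have perm: "\<tau> permutes {m'..n}" using assms(2) by (simp add: perms_eq_permutes)
  have "m' - 1 < \<tau> i \<longleftrightarrow> m' \<le> i" if "i \<le> n" for i
    using permutes_not_in[OF perm, of i] permutes_in_image[OF perm, of i] that
    by (cases "i \<in> {m'..n}") auto
  then show ?thesis
    unfolding ninc_above_def ninc_def using assms(1)
    by (intro arg_cong[where f = card]) auto
qed

lemma mallows_product_form:
  fixes q :: real and n :: int
  assumes mm: "m \<le> m'"
  defines "Z \<equiv> (\<Sum>v\<in>perms m' n. q ^ ninc m' n v)"
  shows "mallows q m' n = (\<lambda>\<tau>. mallows_weight q m n (m' - 1) \<tau> *
    (if clip (m' - 1) \<tau> = clip (m' - 1) id then 1 / Z else 0))"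
  by (auto simp: fun_eq_iff mallows_def mallows_weight_def Z_def perms_iff_clip[OF mm]
      ninc_above_eq_ninc[OF mm])

section \<open>Lowering the value at a site\<close>

definition partner :: "int \<Rightarrow> int \<Rightarrow> (int \<Rightarrow> int) \<Rightarrow> int \<Rightarrow> int" where
  "partner m b \<tau> p = (ARG_MAX \<tau> i. m \<le> i \<and> i < p \<and> b < \<tau> i \<and> \<tau> i < \<tau> p)"

definition swap_down :: "int \<Rightarrow> int \<Rightarrow> (int \<Rightarrow> int) \<Rightarrow> int \<Rightarrow> int \<Rightarrow> int" where
  "swap_down m b \<tau> p = \<tau> \<circ> Transposition.transpose (partner m b \<tau> p) p"

lemma partner_greatest:
  assumes "0 < ninc_at m b \<tau> p"
  defines "i \<equiv> partner m b \<tau> p"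
  shows "m \<le> i" "i < p" "b < \<tau> i" "\<tau> i < \<tau> p"
    and "\<And>c. m \<le> c \<Longrightarrow> c < p \<Longrightarrow> b < \<tau> c \<Longrightarrow> \<tau> c < \<tau> p \<Longrightarrow> \<tau> c \<le> \<tau> i"
proof -
  define S where "S = {c. m \<le> c \<and> c < p \<and> b < \<tau> c \<and> \<tau> c < \<tau> p}"
  have "S \<noteq> {}" "finite S"
    using assms(1) by (auto simp: S_def ninc_at_def card_gt_0_iff)
  then have "Max (\<tau> ` S) \<in> \<tau> ` S" by (intro Max_in) auto
  then obtain c0 where "c0 \<in> S" "\<tau> c0 = Max (\<tau> ` S)" by auto
  then have c0: "c0 \<in> S" "\<forall>c\<in>S. \<tau> c \<le> \<tau> c0"
    using \<open>finite S\<close> by auto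
  have "i \<in> S \<and> (\<forall>c\<in>S. \<tau> c \<le> \<tau> i)"
    unfolding i_def partner_def
    by (rule arg_maxI[where x = c0 and Q = "\<lambda>i. i \<in> S \<and> (\<forall>c\<in>S. \<tau> c \<le> \<tau> i)"])
      (use c0 in \<open>auto simp: S_def not_less\<close>)
  then show "m \<le> i" "i < p" "b < \<tau> i" "\<tau> i < \<tau> p"
    and "\<And>c. m \<le> c \<Longrightarrow> c < p \<Longrightarrow> b < \<tau> c \<Longrightarrow> \<tau> c < \<tau> p \<Longrightarrow> \<tau> c \<le> \<tau> i"
    by (auto simp: S_def)
qed

lemma swap_down_apply:
  "swap_down m b \<tau> p (partner m b \<tau> p) = \<tau> p"
  "swap_down m b \<tau> p p = \<tau> (partner m b \<tau> p)"
  "c \<noteq> partner m b \<tau> p \<Longrightarrow> c \<noteq> p \<Longrightarrow> swap_down m b \<tau> p c = \<tau> c"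
  by (simp_all add: swap_down_def Transposition.transpose_def)

lemma swap_down_in_perms:
  assumes "\<tau> \<in> perms m n" "p \<le> n" "0 < ninc_at m b \<tau> p"
  shows "swap_down m b \<tau> p \<in> perms m n"
  using assms partner_greatest[OF assms(3)]
  by (simp add: perms_eq_permutes swap_down_def comp_transpose_permutes)

lemma clip_swap_down:
  assumes "0 < ninc_at m b \<tau> p"
  shows "clip b (swap_down m b \<tau> p) = clip b \<tau>"
proof -
  define i where "i = partner m b \<tau> p"
  note i = partner_greatest[OF assms, folded i_def]
  note \<sigma> = swap_down_apply[where m = m and b = b and \<tau> = \<tau> and p = p, folded i_def]
  have "min (swap_down m b \<tau> p x) (b + 1) = min (\<tau> x) (b + 1)" for x
    using i \<sigma> by (cases "x = i"; cases "x = p") auto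
  then show ?thesis by (simp add: clip_def)
qed

lemma ninc_above_swap_down:
  assumes "\<tau> \<in> perms m n" "p \<le> n" "0 < ninc_at m b \<tau> p"
  shows "ninc_above m n b (swap_down m b \<tau> p) + 1 = ninc_above m n b \<tau>"
proof -
  define i where "i = partner m b \<tau> p"
  note i = partner_greatest[OF assms(3), folded i_def]
  have "inj \<tau>" using assms(1) by (simp add: perms_eq_permutes permutes_inj)
  then have "\<tau> c < \<tau> i \<or> \<tau> p < \<tau> c" if "i < c" "c < p" "b < \<tau> c" for c
    using i(1) i(5)[of c] that by (cases "\<tau> c < \<tau> p") (auto simp: inj_eq order.order_iff_strict)
  then show ?thesis
    unfolding swap_down_def i_def[symmetric] using i assms(2)
    by (intro ninc_above_transpose_big) auto
qed

lemma ninc_at_swap_down: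
  assumes "inj \<tau>" "0 < ninc_at m b \<tau> p"
  shows "ninc_at m b (swap_down m b \<tau> p) p + 1 = ninc_at m b \<tau> p"
proof -
  define i where "i = partner m b \<tau> p"
  define \<sigma> where "\<sigma> = swap_down m b \<tau> p"
  note i = partner_greatest[OF assms(2), folded i_def]
  note \<sigma> = swap_down_apply[where m = m and b = b and \<tau> = \<tau> and p = p, folded i_def \<sigma>_def]
  define A where "A \<phi> = {c. m \<le> c \<and> c < p \<and> b < \<phi> c \<and> b < \<phi> p \<and> \<phi> c < \<phi> p}" for \<phi>
  have "A \<tau> = insert i (A \<sigma>)"
  proof (intro equalityI subsetI)
    fix c assume c: "c \<in> A \<tau>"
    show "c \<in> insert i (A \<sigma>)"
    proof (cases "c = i")
      case False
      then have "\<tau> c < \<tau> i"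
        using c i(5)[of c] inj_eq[OF assms(1), of c i] by (force simp: A_def)
      then show ?thesis using c False i \<sigma> by (auto simp: A_def)
    qed simp
  next
    fix c assume c: "c \<in> insert i (A \<sigma>)"
    show "c \<in> A \<tau>"
    proof (cases "c = i")
      case False
      then have "c \<in> A \<sigma>" "c \<noteq> p" using c by (auto simp: A_def)
      then show ?thesis using False i \<sigma> by (auto simp: A_def)
    qed (use i in \<open>simp add: A_def\<close>)
  qed
  moreover have "i \<notin> A \<sigma>" "finite (A \<sigma>)"
    using i \<sigma> by (auto simp: A_def)
  ultimately show ?thesis
    unfolding ninc_at_def A_def[symmetric] \<sigma>_def[symmetric] by simp
qed

lemma swap_down_partner_least:
  assumes "inj \<tau>" "0 < ninc_at m b \<tau> p"
  defines "\<sigma> \<equiv> swap_down m b \<tau> p" and "i \<equiv> partner m b \<tau> p"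
  shows "m \<le> i \<and> i < p \<and> b < \<sigma> i \<and> \<sigma> p < \<sigma> i"
    and "\<And>c. m \<le> c \<Longrightarrow> c < p \<Longrightarrow> b < \<sigma> c \<Longrightarrow> \<sigma> p < \<sigma> c \<Longrightarrow> \<sigma> i \<le> \<sigma> c"
proof -
  note i = partner_greatest[OF assms(2), folded i_def]
  note \<sigma> = swap_down_apply[where m = m and b = b and \<tau> = \<tau> and p = p, folded i_def \<sigma>_def]
  show "m \<le> i \<and> i < p \<and> b < \<sigma> i \<and> \<sigma> p < \<sigma> i"
    using i(1-4) \<sigma>(1,2) by simp
  fix c assume c: "m \<le> c" "c < p" "b < \<sigma> c" "\<sigma> p < \<sigma> c"
  show "\<sigma> i \<le> \<sigma> c"
  proof (cases "c = i")
    case False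
    then have \<sigma>c: "\<sigma> c = \<tau> c" "\<tau> c \<noteq> \<tau> p"
      using c(2) \<sigma>(3) inj_eq[OF assms(1), of c p] by auto
    have "b < \<tau> c" "\<tau> i < \<tau> c"
      using c(3,4) \<sigma>(2) \<sigma>c(1) by simp_all
    then have "\<not> \<tau> c < \<tau> p"
      using i(5)[OF c(1,2)] by (meson leD)
    then show ?thesis
      using \<sigma>(1) \<sigma>c by simp
  qed simp
qed

lemma inj_on_swap_down: "inj_on (\<lambda>\<tau>. swap_down m b \<tau> p) {\<tau> \<in> perms m n. 0 < ninc_at m b \<tau> p}"
proof (rule inj_onI)
  fix \<tau>1 \<tau>2
  assume \<tau>: "\<tau>1 \<in> {\<tau> \<in> perms m n. 0 < ninc_at m b \<tau> p}" "\<tau>2 \<in> {\<tau> \<in> perms m n. 0 < ninc_at m b \<tau> p}"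
    and eq: "swap_down m b \<tau>1 p = swap_down m b \<tau>2 p"
  define \<sigma> where "\<sigma> = swap_down m b \<tau>1 p"
  define i1 i2 where "i1 = partner m b \<tau>1 p" and "i2 = partner m b \<tau>2 p"
  have inj: "inj \<tau>1" "inj \<tau>2" using \<tau> permutes_inj by (auto simp: perms_eq_permutes)
  have pos: "0 < ninc_at m b \<tau>1 p" "0 < ninc_at m b \<tau>2 p" using \<tau> by auto
  have \<sigma>2: "swap_down m b \<tau>2 p = \<sigma>" using eq by (simp add: \<sigma>_def)
  note least1 = swap_down_partner_least[OF inj(1) pos(1), folded \<sigma>_def i1_def]
  note least2 = swap_down_partner_least[OF inj(2) pos(2), unfolded \<sigma>2, folded i2_def]
  have "\<sigma> i1 = \<sigma> i2"
    using least1(2)[of i2] least2(2)[of i1] least1(1) least2(1) by simp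
  moreover have "inj \<sigma>"
    using inj(1) by (simp add: \<sigma>_def swap_down_def inj_compose)
  ultimately have "i1 = i2" by (simp add: inj_eq)
  have "\<tau>1 = \<sigma> \<circ> Transposition.transpose i1 p"
    by (simp add: \<sigma>_def swap_down_def i1_def swap_nilpotent)
  also have "\<dots> = \<tau>2"
    unfolding \<open>i1 = i2\<close> \<sigma>2[symmetric] by (simp add: swap_down_def i2_def swap_nilpotent)
  finally show "\<tau>1 = \<tau>2" .
qed

section \<open>Tail bound for the Mallows factor\<close>

lemma sum_ninc_at_ge:
  fixes g :: "(int \<Rightarrow> int) \<Rightarrow> real"
  assumes q: "0 \<le> q" and g: "\<And>c. 0 \<le> g c" and p: "p \<le> n"
  shows "(\<Sum>\<tau>\<in>{\<tau> \<in> perms m n. G (clip b \<tau>) \<and> j \<le> ninc_at m b \<tau> p}. mallows_weight q m n b \<tau> * g (clip b \<tau>))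
    \<le> q ^ j * (\<Sum>\<tau>\<in>{\<tau> \<in> perms m n. G (clip b \<tau>)}. mallows_weight q m n b \<tau> * g (clip b \<tau>))"
proof (induction j)
  case 0
  show ?case by simp
next
  case (Suc j)
  let ?w = "\<lambda>\<tau>. mallows_weight q m n b \<tau> * g (clip b \<tau>)"
  let ?A = "\<lambda>j. {\<tau> \<in> perms m n. G (clip b \<tau>) \<and> j \<le> ninc_at m b \<tau> p}"
  let ?d = "\<lambda>\<tau>. swap_down m b \<tau> p"
  have w_nonneg: "0 \<le> ?w \<tau>" for \<tau>
    using mallows_weight_nonneg[OF q] g by simp
  have w: "?w \<tau> = q * ?w (?d \<tau>)" and into: "?d \<tau> \<in> ?A j" if "\<tau> \<in> ?A (Suc j)" for \<tau>
  proof -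
    have \<tau>: "\<tau> \<in> perms m n" "0 < ninc_at m b \<tau> p"
      using that by auto
    have "inj \<tau>" using \<tau>(1) by (simp add: perms_eq_permutes permutes_inj)
    have "ninc_above m n b \<tau> = Suc (ninc_above m n b (?d \<tau>))"
      using ninc_above_swap_down[OF \<tau>(1) p \<tau>(2)] by simp
    then show "?w \<tau> = q * ?w (?d \<tau>)"
      using swap_down_in_perms[OF \<tau>(1) p \<tau>(2)] \<tau>(1)
      by (simp add: mallows_weight_def clip_swap_down[OF \<tau>(2)])
    show "?d \<tau> \<in> ?A j"
      using ninc_at_swap_down[OF \<open>inj \<tau>\<close> \<tau>(2)] swap_down_in_perms[OF \<tau>(1) p \<tau>(2)] that
      by (simp add: clip_swap_down[OF \<tau>(2)])
  qed
  have inj: "inj_on ?d (?A (Suc j))"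
    by (rule inj_on_subset[OF inj_on_swap_down]) auto
  have "(\<Sum>\<tau>\<in>?A (Suc j). ?w \<tau>) = q * (\<Sum>\<tau>\<in>?A (Suc j). ?w (?d \<tau>))"
    using w by (simp add: sum_distrib_left)
  also have "\<dots> = q * (\<Sum>\<tau>\<in>?d ` ?A (Suc j). ?w \<tau>)"
    by (simp add: sum.reindex[OF inj])
  also have "\<dots> \<le> q * (\<Sum>\<tau>\<in>?A j. ?w \<tau>)"
    using into finite_perms w_nonneg by (intro mult_left_mono[OF _ q] sum_mono2) auto
  also have "\<dots> \<le> q * (q ^ j * (\<Sum>\<tau>\<in>{\<tau> \<in> perms m n. G (clip b \<tau>)}. ?w \<tau>))"
    using Suc.IH q by (rule mult_left_mono)
  finally show ?case by (simp add: mult.assoc)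
qed

lemma sum_ninc_at_ge_threshold:
  fixes g :: "(int \<Rightarrow> int) \<Rightarrow> real" and h :: "(int \<Rightarrow> int) \<Rightarrow> nat"
  assumes q: "0 \<le> q" and g: "\<And>c. 0 \<le> g c" and p: "p \<le> n"
  shows "(\<Sum>\<tau>\<in>{\<tau> \<in> perms m n. G (clip b \<tau>) \<and> h (clip b \<tau>) \<le> ninc_at m b \<tau> p}.
      mallows_weight q m n b \<tau> * g (clip b \<tau>))
    \<le> (\<Sum>\<tau>\<in>{\<tau> \<in> perms m n. G (clip b \<tau>)}. mallows_weight q m n b \<tau> * g (clip b \<tau>) * q ^ h (clip b \<tau>))"
proof -
  let ?w = "\<lambda>\<tau>. mallows_weight q m n b \<tau> * g (clip b \<tau>)" and ?H = "\<lambda>\<tau>. h (clip b \<tau>)"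
  define S where "S = {\<tau> \<in> perms m n. G (clip b \<tau>)}"
  define D where "D = ?H ` S"
  have fin: "finite S" "finite D" by (simp_all add: S_def D_def finite_perms)
  have "(\<Sum>\<tau>\<in>{\<tau> \<in> perms m n. G (clip b \<tau>) \<and> ?H \<tau> \<le> ninc_at m b \<tau> p}. ?w \<tau>)
      = (\<Sum>d\<in>D. \<Sum>\<tau>\<in>{\<tau> \<in> perms m n. G (clip b \<tau>) \<and> ?H \<tau> = d \<and> d \<le> ninc_at m b \<tau> p}. ?w \<tau>)"
    by (subst sum.group[symmetric, where g = ?H and T = D])
      (auto simp: fin finite_perms D_def S_def intro!: sum.cong arg_cong2[where f = sum])
  also have "\<dots> \<le> (\<Sum>d\<in>D. q ^ d * (\<Sum>\<tau>\<in>{\<tau> \<in> perms m n. G (clip b \<tau>) \<and> ?H \<tau> = d}. ?w \<tau>))"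
    using sum_ninc_at_ge[OF q g p, where G = "\<lambda>c. G c \<and> h c = _"] by (intro sum_mono) simp
  also have "\<dots> = (\<Sum>d\<in>D. \<Sum>\<tau>\<in>{\<tau> \<in> S. ?H \<tau> = d}. ?w \<tau> * q ^ ?H \<tau>)"
    by (simp add: S_def sum_distrib_left mult.commute conj_assoc)
  also have "\<dots> = (\<Sum>\<tau>\<in>S. ?w \<tau> * q ^ ?H \<tau>)"
    by (rule sum.group) (auto simp: fin D_def)
  finally show ?thesis by (simp add: S_def)
qed

lemma sum_power_le_geometric:
  fixes q :: real
  assumes q: "0 \<le> q" "q < 1" and D: "finite D" "\<And>d. d \<in> D \<Longrightarrow> k \<le> d"
  shows "(\<Sum>d\<in>D. q ^ d) \<le> q ^ k / (1 - q)"
proof (cases "D = {}")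
  case False
  have "(\<Sum>d\<in>D. q ^ d) \<le> (\<Sum>d\<in>{k..Max D}. q ^ d)"
    using D q by (intro sum_mono2) auto
  also have "\<dots> = (q ^ k - q ^ Suc (Max D)) / (1 - q)"
    using D(2)[OF Max_in[OF D(1) False]] q by (simp add: sum_gp)
  also have "\<dots> \<le> q ^ k / (1 - q)"
    using q by (intro divide_right_mono) auto
  finally show ?thesis .
qed (use q in simp)

definition nbig :: "int \<Rightarrow> int \<Rightarrow> (int \<Rightarrow> int) \<Rightarrow> int \<Rightarrow> nat" where
  "nbig m b \<tau> p = card {i. m \<le> i \<and> i < p \<and> b < \<tau> i}"

lemma clip_big_iff: "b < clip b \<tau> x \<longleftrightarrow> b < \<tau> x"
  by (simp add: clip_def)

lemma nbig_clip: "nbig m b (clip b \<tau>) p = nbig m b \<tau> p"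
  by (simp add: nbig_def clip_big_iff)

lemma nbig_strict_mono: "m \<le> p \<Longrightarrow> p < p' \<Longrightarrow> b < \<tau> p \<Longrightarrow> nbig m b \<tau> p < nbig m b \<tau> p'"
  unfolding nbig_def by (intro psubset_card_mono) auto

lemma sum_big_sites_le:
  fixes q :: real and K :: int and a :: nat
  assumes q: "0 \<le> q" "q < 1"
  shows "(\<Sum>p\<in>{m..n}. if b < \<tau> p \<and> int a + 1 \<le> int (nbig m b \<tau> p) - K
      then q ^ nat (int (nbig m b \<tau> p) - K) else 0) \<le> q ^ (a + 1) / (1 - q)"
proof -
  define S where "S = {p \<in> {m..n}. b < \<tau> p \<and> int a + 1 \<le> int (nbig m b \<tau> p) - K}"
  define f where "f p = nat (int (nbig m b \<tau> p) - K)" for p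
  have "finite S" by (rule finite_subset[of _ "{m..n}"]) (auto simp: S_def)
  have f_ge: "a + 1 \<le> f p" if "p \<in> S" for p
    using that by (simp add: S_def f_def le_nat_iff)
  have "inj_on f S"
  proof (rule linorder_inj_onI')
    fix p p' assume p: "p \<in> S" "p' \<in> S" "p < p'"
    then have "int (nbig m b \<tau> p) < int (nbig m b \<tau> p')"
      using nbig_strict_mono[of m p p' b \<tau>] by (simp add: S_def)
    then show "f p \<noteq> f p'"
      using p(1) unfolding S_def f_def by (simp add: nat_eq_iff)
  qed
  have "(\<Sum>p\<in>{m..n}. if b < \<tau> p \<and> int a + 1 \<le> int (nbig m b \<tau> p) - K
      then q ^ nat (int (nbig m b \<tau> p) - K) else 0) = (\<Sum>p\<in>S. q ^ f p)"
    unfolding S_def f_def by (rule sum.inter_filter[symmetric]) simp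
  also have "\<dots> = (\<Sum>d\<in>f ` S. q ^ d)"
    by (simp add: sum.reindex[OF \<open>inj_on f S\<close>])
  also have "\<dots> \<le> q ^ (a + 1) / (1 - q)"
    using q \<open>finite S\<close> f_ge by (intro sum_power_le_geometric) auto
  finally show ?thesis .
qed

lemma sum_exists_le_sum:
  fixes f :: "'a \<Rightarrow> real"
  assumes A: "finite A" and I: "finite I" and f: "\<And>x. x \<in> A \<Longrightarrow> 0 \<le> f x"
  shows "(\<Sum>x\<in>{x \<in> A. \<exists>i\<in>I. Q x i}. f x) \<le> (\<Sum>i\<in>I. \<Sum>x\<in>{x \<in> A. Q x i}. f x)"
proof -
  have "(\<Sum>x\<in>{x \<in> A. \<exists>i\<in>I. Q x i}. f x) \<le> (\<Sum>x\<in>{x \<in> A. \<exists>i\<in>I. Q x i}. \<Sum>i\<in>I. f x * of_bool (Q x i))"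
  proof (rule sum_mono)
    fix x assume "x \<in> {x \<in> A. \<exists>i\<in>I. Q x i}"
    then obtain i where "x \<in> A" "i \<in> I" "Q x i" by blast
    then show "f x \<le> (\<Sum>i\<in>I. f x * of_bool (Q x i))"
      using member_le_sum[of i I "\<lambda>i. f x * of_bool (Q x i)"] I f by simp
  qed
  also have "\<dots> \<le> (\<Sum>x\<in>A. \<Sum>i\<in>I. f x * of_bool (Q x i))"
    using A f by (intro sum_mono2 sum_nonneg) auto
  also have "\<dots> = (\<Sum>i\<in>I. \<Sum>x\<in>{x \<in> A. Q x i}. f x)"
  proof -
    have "f x * of_bool (Q x i) = (if Q x i then f x else 0)" for x i by simp
    then show ?thesis using A by (subst sum.swap) (simp add: sum.inter_filter)
  qed
  finally show ?thesis .
qed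

lemma sum_witness_le:
  fixes q :: real and g :: "(int \<Rightarrow> int) \<Rightarrow> real" and K :: int and a :: nat
  assumes q: "0 \<le> q" "q < 1" and g: "\<And>c. 0 \<le> g c"
  shows "(\<Sum>\<tau>\<in>{\<tau> \<in> perms m n. \<exists>p\<in>{m..n}. b < \<tau> p \<and> int a + 1 \<le> int (nbig m b \<tau> p) - K
        \<and> int (nbig m b \<tau> p) - K \<le> int (ninc_at m b \<tau> p)}. mallows_weight q m n b \<tau> * g (clip b \<tau>))
    \<le> q ^ (a + 1) / (1 - q) * (\<Sum>\<tau>\<in>perms m n. mallows_weight q m n b \<tau> * g (clip b \<tau>))"
proof -
  let ?P = "perms m n" and ?w = "\<lambda>\<tau>. mallows_weight q m n b \<tau> * g (clip b \<tau>)"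
  define good where "good p c \<longleftrightarrow> b < c p \<and> int a + 1 \<le> int (nbig m b c p) - K" for p c
  define h where "h p c = nat (int (nbig m b c p) - K)" for p c
  have clip: "good p (clip b \<tau>) \<longleftrightarrow> b < \<tau> p \<and> int a + 1 \<le> int (nbig m b \<tau> p) - K"
    "h p (clip b \<tau>) = nat (int (nbig m b \<tau> p) - K)" for \<tau> p
    by (simp_all add: good_def h_def clip_big_iff nbig_clip)
  have w: "0 \<le> ?w \<tau>" for \<tau>
    using g mallows_weight_nonneg[OF q(1)] by simp
  have "b < \<tau> p \<and> int a + 1 \<le> int (nbig m b \<tau> p) - K \<and> int (nbig m b \<tau> p) - K \<le> int (ninc_at m b \<tau> p)
      \<longleftrightarrow> good p (clip b \<tau>) \<and> h p (clip b \<tau>) \<le> ninc_at m b \<tau> p" for \<tau> p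
    by (auto simp: clip nat_le_iff)
  then have "(\<Sum>\<tau>\<in>{\<tau> \<in> ?P. \<exists>p\<in>{m..n}. b < \<tau> p \<and> int a + 1 \<le> int (nbig m b \<tau> p) - K
        \<and> int (nbig m b \<tau> p) - K \<le> int (ninc_at m b \<tau> p)}. ?w \<tau>)
      \<le> (\<Sum>p\<in>{m..n}. \<Sum>\<tau>\<in>{\<tau> \<in> ?P. good p (clip b \<tau>) \<and> h p (clip b \<tau>) \<le> ninc_at m b \<tau> p}. ?w \<tau>)"
    using w by (simp only:) (intro sum_exists_le_sum finite_perms, auto)
  also have "\<dots> \<le> (\<Sum>p\<in>{m..n}. \<Sum>\<tau>\<in>{\<tau> \<in> ?P. good p (clip b \<tau>)}. ?w \<tau> * q ^ h p (clip b \<tau>))"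
    by (intro sum_mono sum_ninc_at_ge_threshold[OF q(1) g]) simp
  also have "\<dots> = (\<Sum>\<tau>\<in>?P. ?w \<tau> * (\<Sum>p\<in>{m..n}. if b < \<tau> p \<and> int a + 1 \<le> int (nbig m b \<tau> p) - K
      then q ^ nat (int (nbig m b \<tau> p) - K) else 0))"
    unfolding sum_distrib_left
    by (subst sum.swap) (simp add: sum.inter_filter finite_perms clip if_distrib cong: if_cong)
  also have "\<dots> \<le> (\<Sum>\<tau>\<in>?P. ?w \<tau> * (q ^ (a + 1) / (1 - q)))"
    using w by (intro sum_mono mult_left_mono sum_big_sites_le q) auto
  also have "\<dots> = q ^ (a + 1) / (1 - q) * (\<Sum>\<tau>\<in>?P. ?w \<tau>)"
    by (simp add: sum_distrib_left mult.commute)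
  finally show ?thesis .
qed

section \<open>Height functions and the event\<close>

lemma height_thr:
  assumes "m \<le> y" "y \<le> n"
  shows "height m n (thr v \<tau>) y = y - 2 * int (card {x. m \<le> x \<and> x \<le> y \<and> \<tau> x \<le> v})"
proof -
  have "(\<Sum>x\<in>{m..y}. 1 - 2 * (if x \<le> n then thr v \<tau> x else 1))
      = (\<Sum>x\<in>{m..y}. 1 - 2 * of_bool (\<tau> x \<le> v))"
    using assms by (intro sum.cong) (auto simp: thr_def)
  also have "\<dots> = int (card {m..y}) - 2 * int (card ({m..y} \<inter> {x. \<tau> x \<le> v}))"
    by (simp add: sum_subtractf sum_distrib_left)
  also have "{m..y} \<inter> {x. \<tau> x \<le> v} = {x. m \<le> x \<and> x \<le> y \<and> \<tau> x \<le> v}"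
    by auto
  finally show ?thesis
    unfolding height_def using assms by simp
qed

lemma exists_value_above:
  assumes perm: "\<tau> \<in> perms m n" and "m \<le> y" "y \<le> n" "m - 1 \<le> v" "v \<le> n"
    and many: "v - m + 1 < int (card {x. m \<le> x \<and> x \<le> y \<and> \<tau> x \<le> v}) + (n - y)"
  shows "\<exists>p. y < p \<and> p \<le> n \<and> v < \<tau> p"
proof (rule ccontr)
  assume "\<nexists>p. y < p \<and> p \<le> n \<and> v < \<tau> p"
  then have "{x. m \<le> x \<and> x \<le> y \<and> \<tau> x \<le> v} \<union> {y<..n} \<subseteq> {x \<in> {m..n}. \<tau> x \<le> v}"
    using assms(2,3) by (auto simp: not_less)
  then have "card ({x. m \<le> x \<and> x \<le> y \<and> \<tau> x \<le> v} \<union> {y<..n}) \<le> card {x \<in> {m..n}. \<tau> x \<le> v}"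
    by (intro card_mono) auto
  also have "\<dots> = card {w \<in> {m..n}. w \<le> v}"
    using perm by (intro card_permutes_preimage) (simp add: perms_eq_permutes)
  also have "{w \<in> {m..n}. w \<le> v} = {m..v}"
    using assms(5) by auto
  finally have "int (card {x. m \<le> x \<and> x \<le> y \<and> \<tau> x \<le> v}) + (n - y) \<le> v - m + 1"
    using assms(4) by (subst (asm) card_Un_disjoint) auto
  then show False using many by simp
qed

lemma nbig_le_ninc_at:
  assumes perm: "\<tau> \<in> perms m n" and "m \<le> p" "p \<le> n" "b < \<tau> p"
  shows "int (nbig m b \<tau> p) - (n - \<tau> p) \<le> int (ninc_at m b \<tau> p)"
proof -
  have range: "m \<le> \<tau> p" "\<tau> p \<le> n" and inj: "inj \<tau>"
    using perm assms(2,3) permutes_in_image[of \<tau> "{m..n}" p] permutes_inj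
    by (auto simp: perms_eq_permutes)
  have "{i. m \<le> i \<and> i < p \<and> b < \<tau> i}
      \<subseteq> {i. m \<le> i \<and> i < p \<and> b < \<tau> i \<and> b < \<tau> p \<and> \<tau> i < \<tau> p} \<union> {x \<in> {m..n}. \<tau> p < \<tau> x}"
    using assms(3,4) inj_eq[OF inj] by (auto simp: not_less order.order_iff_strict)
  then have "nbig m b \<tau> p \<le> card ({i. m \<le> i \<and> i < p \<and> b < \<tau> i \<and> b < \<tau> p \<and> \<tau> i < \<tau> p}
      \<union> {x \<in> {m..n}. \<tau> p < \<tau> x})"
    unfolding nbig_def by (intro card_mono) auto
  also have "\<dots> \<le> ninc_at m b \<tau> p + card {x \<in> {m..n}. \<tau> p < \<tau> x}"
    unfolding ninc_at_def by (rule card_Un_le)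
  also have "card {x \<in> {m..n}. \<tau> p < \<tau> x} = card {w \<in> {m..n}. \<tau> p < w}"
    using perm by (intro card_permutes_preimage) (simp add: perms_eq_permutes)
  also have "{w \<in> {m..n}. \<tau> p < w} = {\<tau> p + 1..n}"
    using range by auto
  finally show ?thesis
    using range by simp
qed

lemma nbig_ge:
  assumes "\<And>x. m \<le> x \<Longrightarrow> x \<le> y \<Longrightarrow> b < \<tau> x" "y < p"
  shows "y - m + 1 \<le> int (nbig m b \<tau> p)"
proof -
  have "card {m..y} \<le> nbig m b \<tau> p"
    unfolding nbig_def using assms by (intro card_mono) auto
  then show ?thesis by simp
qed

lemma event_witness:
  fixes N k a :: nat and X :: int
  assumes perm: "\<tau> \<in> perms (- X) X" and kN: "k \<le> N" and X: "int N + int a + 1 \<le> X"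
    and full: "height (- X) X (thr (- X + int k - 1) \<tau>) (int N - int k + int a) = int N - int k + int a"
    and low: "height (- X) X (thr (- 1 + int k - int N) \<tau>) (int N - int k + int a) < int N - int k - int a"
  defines "b \<equiv> - X + int k - 1" and "K \<equiv> X - int k + int N"
  shows "\<exists>p\<in>{- X..X}. b < \<tau> p \<and> int a + 1 \<le> int (nbig (- X) b \<tau> p) - K
    \<and> int (nbig (- X) b \<tau> p) - K \<le> int (ninc_at (- X) b \<tau> p)"
proof -
  define y where "y = int N - int k + int a"
  define v where "v = - 1 + int k - int N"
  have y: "- X \<le> y" "y < X" using kN X by (simp_all add: y_def)
  have "card {x. - X \<le> x \<and> x \<le> y \<and> \<tau> x \<le> b} = 0"
    using full height_thr[of "- X" y X b \<tau>] y by (simp add: y_def b_def)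
  then have "{x. - X \<le> x \<and> x \<le> y \<and> \<tau> x \<le> b} = {}"
    by simp
  then have big: "b < \<tau> x" if "- X \<le> x" "x \<le> y" for x
    using that by (metis (mono_tags, lifting) empty_iff mem_Collect_eq not_le)
  have "int a + 1 \<le> int (card {x. - X \<le> x \<and> x \<le> y \<and> \<tau> x \<le> v})"
    using low height_thr[of "- X" y X v \<tau>] y by (simp add: y_def v_def)
  then obtain p where p: "y < p" "p \<le> X" "v < \<tau> p"
    using exists_value_above[OF perm, of y v] y kN X by (auto simp: y_def v_def)
  have "b < \<tau> p" using p(3) X by (simp add: b_def v_def)
  moreover have "int a + 1 \<le> int (nbig (- X) b \<tau> p) - K"
    using nbig_ge[of "- X" y b \<tau> p, OF big p(1)] by (simp add: y_def K_def)
  moreover have "int (nbig (- X) b \<tau> p) - K \<le> int (ninc_at (- X) b \<tau> p)"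
    using nbig_le_ninc_at[OF perm _ p(2) \<open>b < \<tau> p\<close>] p y by (simp add: K_def v_def)
  ultimately show ?thesis using p y by auto
qed

section \<open>The limit law and the law at time t\<close>

lemma sum_mallows_le_1:
  assumes "m \<le> m'"
  shows "(\<Sum>\<tau>\<in>perms m n. mallows q m' n \<tau>) \<le> 1"
proof -
  define Z where "Z = (\<Sum>\<tau>\<in>perms m' n. q ^ ninc m' n \<tau>)"
  have "(\<Sum>\<tau>\<in>perms m n. mallows q m' n \<tau>) = (\<Sum>\<tau>\<in>perms m' n. mallows q m' n \<tau>)"
    using perms_iff_clip[OF assms] by (intro sum.mono_neutral_right finite_perms) (auto simp: mallows_def)
  also have "\<dots> = Z / Z"
    by (simp add: mallows_def Z_def flip: sum_divide_distrib)
  also have "\<dots> \<le> 1"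
    by (cases "Z = 0") simp_all
  finally show ?thesis .
qed

lemma mallows_bounds:
  assumes "0 \<le> q"
  shows "0 \<le> mallows q m n \<tau> \<and> mallows q m n \<tau> \<le> 1"
proof -
  define Z where "Z = (\<Sum>v\<in>perms m n. q ^ ninc m n v)"
  have "q ^ ninc m n \<tau> \<le> Z" if "\<tau> \<in> perms m n"
    unfolding Z_def using that assms by (intro member_le_sum finite_perms) auto
  moreover have "0 \<le> Z"
    unfolding Z_def using assms by (simp add: sum_nonneg)
  ultimately show ?thesis
    using assms by (cases "Z = 0") (auto simp: mallows_def Z_def[symmetric] divide_le_eq_1_pos less_le)
qed

lemma limit_of_evolved_mallows:
  fixes \<mu> :: "(int \<Rightarrow> int) \<Rightarrow> real"
  assumes q: "0 \<le> q" "q \<le> 1" and "m \<le> lo" "hi \<le> n" "m \<le> m'"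
    and lim: "\<And>\<tau>. ((\<lambda>s. evolve q lo hi (mallows q m' n) s \<tau>) \<longlongrightarrow> \<mu> \<tau>) at_top"
  shows "0 \<le> \<mu> \<tau>" and "(\<Sum>\<tau>\<in>perms m n. \<mu> \<tau>) \<le> 1"
proof -
  have bounds: "0 \<le> mallows q m' n \<tau>" "\<bar>mallows q m' n \<tau>\<bar> \<le> 1" for \<tau>
    using mallows_bounds[OF q(1)] by auto
  have "0 \<le> evolve q lo hi (mallows q m' n) s \<tau>" if "0 \<le> s" for s
    using evolve_nonneg[where \<mu> = "mallows q m' n", OF q bounds that] .
  then show "0 \<le> \<mu> \<tau>"
    by (intro tendsto_lowerbound[OF lim]) (auto simp: eventually_at_top_linorder)
  have "((\<lambda>s. \<Sum>\<tau>\<in>perms m n. evolve q lo hi (mallows q m' n) s \<tau>) \<longlongrightarrow> (\<Sum>\<tau>\<in>perms m n. \<mu> \<tau>)) at_top"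
    by (intro tendsto_sum lim)
  moreover have "(\<Sum>\<tau>\<in>perms m n. evolve q lo hi (mallows q m' n) s \<tau>) = (\<Sum>\<tau>\<in>perms m n. mallows q m' n \<tau>)"
    for s
    by (rule sum_evolve_perms[OF q assms(3,4) bounds(2)])
  ultimately have "(\<Sum>\<tau>\<in>perms m n. \<mu> \<tau>) = (\<Sum>\<tau>\<in>perms m n. mallows q m' n \<tau>)"
    by (simp add: tendsto_const_iff)
  then show "(\<Sum>\<tau>\<in>perms m n. \<mu> \<tau>) \<le> 1"
    using sum_mallows_le_1[OF assms(5)] by simp
qed

lemma limit_law_product_form:
  fixes q :: real and \<mu>0 :: "(int \<Rightarrow> int) \<Rightarrow> real"
  assumes q: "0 \<le> q" "q \<le> 1" and I: "m \<le> lo" "hi \<le> n" "m \<le> m'"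
    and lim: "\<And>\<tau>. ((\<lambda>s. evolve q lo hi (mallows q m' n) s \<tau>) \<longlongrightarrow> \<mu>0 \<tau>) at_top"
  defines "W \<equiv> mallows_weight q m n (m' - 1)" and "\<beta> \<equiv> clip (m' - 1)"
  obtains \<rho> M where "\<mu>0 = (\<lambda>\<tau>. W \<tau> * \<rho> (\<beta> \<tau>))" "\<And>c. 0 \<le> \<rho> c" "\<And>c. \<bar>\<rho> c\<bar> \<le> M"
proof -
  define Z where "Z = (\<Sum>v\<in>perms m' n. q ^ ninc m' n v)"
  define \<rho>0 where "\<rho>0 c = (if c = \<beta> id then 1 / Z else 0)" for c
  have \<rho>0: "0 \<le> \<rho>0 c" "\<bar>\<rho>0 c\<bar> \<le> 1 / Z" for c
    using q by (simp_all add: \<rho>0_def Z_def sum_nonneg)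
  have W: "0 \<le> W \<tau>" for \<tau>
    using q by (simp add: W_def mallows_weight_nonneg)
  have init: "mallows q m' n = (\<lambda>\<tau>. W \<tau> * \<rho>0 (\<beta> \<tau>))"
    unfolding W_def \<beta>_def \<rho>0_def Z_def by (rule mallows_product_form[OF I(3)])
  have "evolve q lo hi (mallows q m' n) s = (\<lambda>\<tau>. W \<tau> * evolve q lo hi \<rho>0 s (\<beta> \<tau>))" for s
    unfolding init W_def \<beta>_def using q I \<rho>0(2) by (intro evolve_product_form) auto
  then have lim': "((\<lambda>s. W \<tau> * evolve q lo hi \<rho>0 s (\<beta> \<tau>)) \<longlongrightarrow> \<mu>0 \<tau>) at_top" for \<tau>
    using lim[of \<tau>] by simp
  have "(at_top :: real filter) \<noteq> bot"
    using trivial_limit_at_top_linorder eventually_False by auto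
  moreover have "finite {\<tau>. W \<tau> \<noteq> 0}"
    by (rule finite_subset[OF _ finite_perms[of m n]]) (auto simp: W_def mallows_weight_def)
  moreover have "0 \<le> \<mu>0 \<tau>" for \<tau>
    using limit_of_evolved_mallows(1)[OF q I lim] .
  ultimately show ?thesis
    using tendsto_product_form[where F = at_top and W = W and \<mu> = \<mu>0 and \<beta> = \<beta>
        and f = "\<lambda>s. evolve q lo hi \<rho>0 s"] W lim' that by blast
qed

lemma evolved_law_product_form:
  fixes q :: real and \<mu>0 :: "(int \<Rightarrow> int) \<Rightarrow> real"
  assumes q: "0 \<le> q" "q \<le> 1" and I: "m \<le> lo" "hi \<le> n" "m \<le> m'" and I': "m \<le> lo'" "hi' \<le> n"
    and t: "0 \<le> t" and lim: "\<And>\<tau>. ((\<lambda>s. evolve q lo hi (mallows q m' n) s \<tau>) \<longlongrightarrow> \<mu>0 \<tau>) at_top"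
  defines "W \<equiv> mallows_weight q m n (m' - 1)" and "\<beta> \<equiv> clip (m' - 1)"
  obtains R where "\<And>c. 0 \<le> R c" "evolve q lo' hi' \<mu>0 t = (\<lambda>\<tau>. W \<tau> * R (\<beta> \<tau>))"
    "(\<Sum>\<tau>\<in>perms m n. evolve q lo' hi' \<mu>0 t \<tau>) \<le> 1"
proof -
  obtain \<rho> M where \<rho>: "\<mu>0 = (\<lambda>\<tau>. W \<tau> * \<rho> (\<beta> \<tau>))" "\<And>c. 0 \<le> \<rho> c" "\<And>c. \<bar>\<rho> c\<bar> \<le> M"
    using limit_law_product_form[OF q I lim] unfolding W_def \<beta>_def by blast
  have law: "evolve q lo' hi' \<mu>0 t = (\<lambda>\<tau>. W \<tau> * evolve q lo' hi' \<rho> t (\<beta> \<tau>))"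
    unfolding \<rho>(1) W_def \<beta>_def by (rule evolve_product_form[OF q I' \<rho>(3)])
  have "0 \<le> evolve q lo' hi' \<rho> t c" for c
    by (rule evolve_nonneg[OF q \<rho>(2,3) t])
  moreover have "\<bar>\<mu>0 \<tau>\<bar> \<le> M" for \<tau>
    using mallows_weight_nonneg[OF q(1)] mallows_weight_le_1[OF q] \<rho>(3)[of "\<beta> \<tau>"]
    unfolding \<rho>(1) W_def
    by (simp add: abs_mult) (meson abs_ge_zero mult_left_le_one_le order_trans)
  then have "(\<Sum>\<tau>\<in>perms m n. evolve q lo' hi' \<mu>0 t \<tau>) = (\<Sum>\<tau>\<in>perms m n. \<mu>0 \<tau>)"
    by (intro sum_evolve_perms[OF q I']) auto
  ultimately show ?thesis
    using that[of "evolve q lo' hi' \<rho> t"] law limit_of_evolved_mallows(2)[OF q I lim] by simp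
qed

lemma event_probability_le:
  fixes q :: real and N k a :: nat and X :: int and \<mu>0 :: "(int \<Rightarrow> int) \<Rightarrow> real"
  assumes q: "0 \<le> q" "q < 1" and kN: "k \<le> N" and X: "int N + int a + 1 \<le> X" and t: "0 \<le> t"
    and lim: "\<And>\<tau>. ((\<lambda>s. evolve q (- X) (int k) (mallows q (- X + int k) X) s \<tau>) \<longlongrightarrow> \<mu>0 \<tau>) at_top"
  shows "(\<Sum>\<tau>\<in>{\<tau> \<in> perms (- X) X.
           height (- X) X (thr (- X + int k - 1) \<tau>) (int N - int k + int a) = int N - int k + int a
         \<and> height (- X) X (thr (- 1 + int k - int N) \<tau>) (int N - int k + int a) < int N - int k - int a}.
         evolve q (- X) X \<mu>0 t \<tau>) \<le> q ^ (a + 1) / (1 - q)"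
    (is "(\<Sum>\<tau>\<in>?E. _) \<le> _")
proof -
  define b where "b = - X + int k - 1"
  define K where "K = X - int k + int N"
  let ?W = "mallows_weight q (- X) X b"
  let ?V = "{\<tau> \<in> perms (- X) X. \<exists>p\<in>{- X..X}. b < \<tau> p \<and> int a + 1 \<le> int (nbig (- X) b \<tau> p) - K
    \<and> int (nbig (- X) b \<tau> p) - K \<le> int (ninc_at (- X) b \<tau> p)}"
  obtain R where R: "\<And>c. 0 \<le> R c" "evolve q (- X) X \<mu>0 t = (\<lambda>\<tau>. ?W \<tau> * R (clip b \<tau>))"
    "(\<Sum>\<tau>\<in>perms (- X) X. evolve q (- X) X \<mu>0 t \<tau>) \<le> 1"
    using evolved_law_product_form[OF q(1) _ _ _ _ _ _ t lim] q kN X unfolding b_def by force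
  have "?E \<subseteq> ?V"
    using event_witness[OF _ kN X] unfolding b_def K_def by blast
  then have "(\<Sum>\<tau>\<in>?E. ?W \<tau> * R (clip b \<tau>)) \<le> (\<Sum>\<tau>\<in>?V. ?W \<tau> * R (clip b \<tau>))"
    using R(1) mallows_weight_nonneg[OF q(1)] by (intro sum_mono2) (auto simp: finite_perms)
  also have "\<dots> \<le> q ^ (a + 1) / (1 - q) * (\<Sum>\<tau>\<in>perms (- X) X. ?W \<tau> * R (clip b \<tau>))"
    by (rule sum_witness_le[OF q R(1)])
  also have "\<dots> \<le> q ^ (a + 1) / (1 - q)"
    using R(2,3) q by (intro mult_left_le) auto
  finally show ?thesis
    unfolding R(2) .
qed

lemma power_le_sqrt_power:
  fixes q :: real
  assumes "0 \<le> q" "q \<le> 1"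
  shows "q ^ (a + 1) \<le> sqrt q ^ a"
proof -
  have "q ^ (a + 1) \<le> q ^ a"
    using assms by (intro power_decreasing) auto
  also have "\<dots> = sqrt q ^ (2 * a)"
    using assms by (simp add: power_mult)
  also have "\<dots> \<le> sqrt q ^ a"
    using assms by (intro power_decreasing) auto
  finally show ?thesis .
qed

theorem lemma3p3:
  fixes q :: real
  assumes "0 \<le> q" and "q < 1"
  shows "\<exists>C > 0. \<forall>(N::nat) (k::nat) (a::nat) (b::real). k \<le> N \<longrightarrow>
    (\<exists>X0::int. \<forall>X \<ge> X0. \<forall>t \<ge> (0::real). \<forall>\<mu>0 :: (int \<Rightarrow> int) \<Rightarrow> real.
      (\<forall>\<tau>. ((\<lambda>s. evolve q (- X) (int k) (mallows q (- X + int k) X) s \<tau>)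
              \<longlongrightarrow> \<mu>0 \<tau>) at_top) \<longrightarrow>
      (\<Sum>\<tau>\<in>{\<tau> \<in> perms (- X) X.
           height (- X) X (thr (- X + int k - 1) \<tau>) (int N - int k + int a) = int N - int k + int a
         \<and> height (- X) X (thr (- 1 + int k - int N) \<tau>) (int N - int k + int a) < int N - int k - int a}.
         evolve q (- X) X \<mu>0 t \<tau>)
      \<le> C * sqrt q ^ a)"
proof (intro exI[of _ "1 / (1 - q)"] conjI allI impI, goal_cases)
  case 1
  show ?case using assms by simp
next
  case (2 N k a b)
  have bound: "q ^ (a + 1) / (1 - q) \<le> 1 / (1 - q) * sqrt q ^ a"
    using power_le_sqrt_power[of q a] assms by (simp add: divide_right_mono)
  show ?case
  proof (intro exI[of _ "int N + int a + 1"] allI impI, goal_cases)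
    case (1 X t \<mu>0)
    then show ?case
      using event_probability_le[OF assms \<open>k \<le> N\<close>, of a X t \<mu>0] bound by fastforce
  qed
qed

end
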